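(* If $f,g\in I$ are nonzero with $S(f)=S(g)$ and $LM(f)\neq LM(g)$, then there exist $a,b\in k^*$ such that $af+bg\neq0$ and $S(af+bg)<_{sign}S(f)$.
   Context: Let $k$ be a field with a valuation $val$, $A=k[X_1,\dots,X_n]$, $|f|$ the total degree. Fix $w\in val(k^* )^n$ and a monomial order $\le_1$. Tropical term order: for $a,b\in k^*$, $ax^\alpha<bx^\beta$ if $|x^\alpha|<|x^\beta|$, or equal degrees and $val(a)+w\cdot\alpha>val(b)+w\cdot\beta$, or equal degrees, equal such quantities and $x^\alpha<_1x^\beta$. $LM(f)$ is the monomial of the largest term of $f$. Let $f_1,\dots,f_s\in A$ ordered by increasing degree, $I=\langle f_1,\dots,f_s\rangle$, $(e_i)$ the canonical basis of $A^s$. Tame syzygy: $(a_1,\dots,a_s)\in A^s$ with $\sum a_jf_j=0$ and an $i$ with $a_i\neq0$, $a_j=0$ for $j>i$, $|a_jf_j|\le|a_if_i|$ for $j<i$; leading monomial $LM(a_i)e_i$; $LM(TSyz(F))$ is the submodule of $A^s$ generated by these. Fix a degree-refining monomial order $\le_m$. Total order $\le_{sign}$ on monomials of $A^s$: $x^\alpha e_i\le_{sign}x^\beta e_j$ if $i<j$; or $i=j$ and $|x^\alpha f_i|<|x^\beta f_i|$; or $i=j$, equal degrees, and either ($x^\alpha e_i\notin LM(TSyz(F))$, $x^\beta e_i\in LM(TSyz(F))$), or (both in and $x^\alpha\le_mx^\beta$), or (both not in and $x^\alpha\le_mx^\beta$). $I_{\le_{sign}x^\alpha e_i}=\mathrm{Span}_k\{x^\beta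 f_j:x^\beta e_j\le_{sign}x^\alpha e_i\}$; the signature $S(f)$ of nonzero $f\in I$ is the smallest $x^\alpha e_i$ with $f\in I_{\le_{sign}x^\alpha e_i}$. *)

theory Defs
  imports Complex_Main "HOL-Library.Poly_Mapping"
begin

type_synonym 'v mon = "'v \<Rightarrow>\<^sub>0 nat"
type_synonym ('v, 'k) mpoly = "'v mon \<Rightarrow>\<^sub>0 'k"

text \<open>Monomials of A^s: x^alpha e_i is represented by the pair (alpha, i), with i < s
  (indices 0..s-1).  Elements of A^s are functions nat => A (entries beyond s are 0).\<close>

definition mdeg :: "('v::finite) mon \<Rightarrow> nat" where
  "mdeg \<alpha> = (\<Sum>v\<in>UNIV. Poly_Mapping.lookup \<alpha> v)"

definition tdeg :: "('v::finite, 'k::zero) mpoly \<Rightarrow> nat" where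
  "tdeg f = (if f = 0 then 0 else Max (mdeg ` Poly_Mapping.keys f))"

definition xmon :: "'v mon \<Rightarrow> ('v, 'k::{zero,one}) mpoly" where
  "xmon \<alpha> = Poly_Mapping.single \<alpha> 1"

text \<open>A valuation on k, given on k^* with values in the reals.\<close>
definition is_valuation :: "('k::field \<Rightarrow> real) \<Rightarrow> bool" where
  "is_valuation val \<longleftrightarrow>
     (\<forall>a b. a \<noteq> 0 \<longrightarrow> b \<noteq> 0 \<longrightarrow> val (a * b) = val a + val b) \<and>
     (\<forall>a b. a \<noteq> 0 \<longrightarrow> b \<noteq> 0 \<longrightarrow> a + b \<noteq> 0 \<longrightarrow> min (val a) (val b) \<le> val (a + b))"

definition is_monomial_order :: "('v mon \<Rightarrow> 'v mon \<Rightarrow> bool) \<Rightarrow> bool" where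
  "is_monomial_order le \<longleftrightarrow>
     (\<forall>x. le x x) \<and> (\<forall>x y. le x y \<and> le y x \<longrightarrow> x = y) \<and>
     (\<forall>x y z. le x y \<and> le y z \<longrightarrow> le x z) \<and> (\<forall>x y. le x y \<or> le y x) \<and>
     (\<forall>x. le 0 x) \<and> (\<forall>x y z. le x y \<longrightarrow> le (x + z) (y + z))"

definition is_deg_monomial_order :: "(('v::finite) mon \<Rightarrow> 'v mon \<Rightarrow> bool) \<Rightarrow> bool" where
  "is_deg_monomial_order le \<longleftrightarrow>
     is_monomial_order le \<and> (\<forall>x y. mdeg x < mdeg y \<longrightarrow> le x y)"

definition wdot :: "('v::finite \<Rightarrow> real) \<Rightarrow> 'v mon \<Rightarrow> real" where
  "wdot w \<alpha> = (\<Sum>v\<in>UNIV. w v * real (Poly_Mapping.lookup \<alpha> v))"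

definition trop_less ::
  "('k \<Rightarrow> real) \<Rightarrow> ('v::finite \<Rightarrow> real) \<Rightarrow> ('v mon \<Rightarrow> 'v mon \<Rightarrow> bool)
   \<Rightarrow> 'k \<times> 'v mon \<Rightarrow> 'k \<times> 'v mon \<Rightarrow> bool" where
  "trop_less val w le1 t u = (case t of (a, \<alpha>) \<Rightarrow> case u of (b, \<beta>) \<Rightarrow>
     mdeg \<alpha> < mdeg \<beta> \<or>
     (mdeg \<alpha> = mdeg \<beta> \<and> val a + wdot w \<alpha> > val b + wdot w \<beta>) \<or>
     (mdeg \<alpha> = mdeg \<beta> \<and> val a + wdot w \<alpha> = val b + wdot w \<beta> \<and> le1 \<alpha> \<beta> \<and> \<alpha> \<noteq> \<beta>))"

definition LM ::
  "('k::zero \<Rightarrow> real) \<Rightarrow> ('v::finite \<Rightarrow> real) \<Rightarrow> ('v mon \<Rightarrow> 'v mon \<Rightarrow> bool)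
   \<Rightarrow> ('v, 'k) mpoly \<Rightarrow> 'v mon" where
  "LM val w le1 f = (THE \<alpha>. \<alpha> \<in> Poly_Mapping.keys f \<and>
      (\<forall>\<beta>\<in>Poly_Mapping.keys f. \<beta> \<noteq> \<alpha> \<longrightarrow> trop_less val w le1 (Poly_Mapping.lookup f \<beta>, \<beta>) (Poly_Mapping.lookup f \<alpha>, \<alpha>)))"

definition tame_syz ::
  "('v::finite, 'k::field) mpoly list \<Rightarrow> (nat \<Rightarrow> ('v, 'k) mpoly) \<Rightarrow> nat \<Rightarrow> bool" where
  "tame_syz F a i \<longleftrightarrow> i < length F \<and> (\<forall>j\<ge>length F. a j = 0) \<and>
     (\<Sum>j<length F. a j * F ! j) = 0 \<and> a i \<noteq> 0 \<and>
     (\<forall>j. i < j \<and> j < length F \<longrightarrow> a j = 0) \<and>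
     (\<forall>j<i. tdeg (a j * F ! j) \<le> tdeg (a i * F ! i))"

definition vmon :: "'v mon \<Rightarrow> nat \<Rightarrow> nat \<Rightarrow> ('v, 'k::{zero,one}) mpoly" where
  "vmon \<alpha> i = (\<lambda>j. if j = i then xmon \<alpha> else 0)"

inductive_set LM_TSyz ::
  "('k::field \<Rightarrow> real) \<Rightarrow> ('v::finite \<Rightarrow> real) \<Rightarrow> ('v mon \<Rightarrow> 'v mon \<Rightarrow> bool)
   \<Rightarrow> ('v, 'k) mpoly list \<Rightarrow> (nat \<Rightarrow> ('v, 'k) mpoly) set"
  for val w le1 F where
    gen: "tame_syz F a i \<Longrightarrow> vmon (LM val w le1 (a i)) i \<in> LM_TSyz val w le1 F"
  | zero: "(\<lambda>_. 0) \<in> LM_TSyz val w le1 F"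
  | add: "u \<in> LM_TSyz val w le1 F \<Longrightarrow> v \<in> LM_TSyz val w le1 F
          \<Longrightarrow> (\<lambda>j. u j + v j) \<in> LM_TSyz val w le1 F"
  | smul: "u \<in> LM_TSyz val w le1 F \<Longrightarrow> (\<lambda>j. p * u j) \<in> LM_TSyz val w le1 F"

definition le_sign ::
  "('k::field \<Rightarrow> real) \<Rightarrow> ('v::finite \<Rightarrow> real) \<Rightarrow> ('v mon \<Rightarrow> 'v mon \<Rightarrow> bool)
   \<Rightarrow> ('v mon \<Rightarrow> 'v mon \<Rightarrow> bool) \<Rightarrow> ('v, 'k) mpoly list
   \<Rightarrow> 'v mon \<times> nat \<Rightarrow> 'v mon \<times> nat \<Rightarrow> bool" where
  "le_sign val w le1 lem F m1 m2 = (case m1 of (\<alpha>, i) \<Rightarrow> case m2 of (\<beta>, j) \<Rightarrow>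
     let inM = (\<lambda>\<gamma>. vmon \<gamma> i \<in> LM_TSyz val w le1 F);
         d\<alpha> = tdeg (xmon \<alpha> * F ! i); d\<beta> = tdeg (xmon \<beta> * F ! i) in
     i < j \<or>
     (i = j \<and> d\<alpha> < d\<beta>) \<or>
     (i = j \<and> d\<alpha> = d\<beta> \<and>
        ((\<not> inM \<alpha> \<and> inM \<beta>) \<or> (inM \<alpha> \<and> inM \<beta> \<and> lem \<alpha> \<beta>) \<or>
         (\<not> inM \<alpha> \<and> \<not> inM \<beta> \<and> lem \<alpha> \<beta>))))"

definition lt_sign where
  "lt_sign val w le1 lem F m1 m2 \<longleftrightarrow> le_sign val w le1 lem F m1 m2 \<and> m1 \<noteq> m2"

definition ideal_of :: "('v, 'k::comm_ring_1) mpoly list \<Rightarrow> ('v, 'k) mpoly set" where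
  "ideal_of F = {(\<Sum>j<length F. a j * F ! j) | a. True}"

definition I_le ::
  "('k::field \<Rightarrow> real) \<Rightarrow> ('v::finite \<Rightarrow> real) \<Rightarrow> ('v mon \<Rightarrow> 'v mon \<Rightarrow> bool)
   \<Rightarrow> ('v mon \<Rightarrow> 'v mon \<Rightarrow> bool) \<Rightarrow> ('v, 'k) mpoly list
   \<Rightarrow> 'v mon \<times> nat \<Rightarrow> ('v, 'k) mpoly set" where
  "I_le val w le1 lem F m = {p. \<exists>c :: 'v mon \<times> nat \<Rightarrow> 'k.
      finite {t. c t \<noteq> 0} \<and>
      (\<forall>t. c t \<noteq> 0 \<longrightarrow> snd t < length F \<and> le_sign val w le1 lem F t m) \<and>
      p = (\<Sum>t\<in>{t. c t \<noteq> 0}. Poly_Mapping.single (fst t) (c t) * F ! snd t)}"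

definition sig ::
  "('k::field \<Rightarrow> real) \<Rightarrow> ('v::finite \<Rightarrow> real) \<Rightarrow> ('v mon \<Rightarrow> 'v mon \<Rightarrow> bool)
   \<Rightarrow> ('v mon \<Rightarrow> 'v mon \<Rightarrow> bool) \<Rightarrow> ('v, 'k) mpoly list
   \<Rightarrow> ('v, 'k) mpoly \<Rightarrow> 'v mon \<times> nat" where
  "sig val w le1 lem F f = (THE m. snd m < length F \<and> f \<in> I_le val w le1 lem F m \<and>
      (\<forall>m'. snd m' < length F \<and> f \<in> I_le val w le1 lem F m' \<longrightarrow> le_sign val w le1 lem F m m'))"

end

theory Submission
  imports Defs "HOL-Library.FuncSet" "HOL-Library.Product_Lexorder"
begin

text \<open>Write f and g as k-linear combinations of the products x^\<alpha> f_i whose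
  indices x^\<alpha> e_i are \<le>_sign S = S(f) = S(g).  Minimality of S forces both
  combinations to have a nonzero coefficient at S itself, so a suitable combination a f + b g
  cancels it and lies in the span of the x^\<alpha> f_i with x^\<alpha> e_i <_sign S.  It is
  nonzero, since otherwise f and g would be proportional and have the same leading monomial.
  Signatures exist because \<le>_sign is a well-order: it is lexicographic in the index, the
  degree, membership in LM(TSyz(F)) and finally the degree-refining order \<le>_m, which has
  only finitely many monomials below any given one.\<close>

lemma deg_monomial_orderD:
  assumes "is_deg_monomial_order lem"
  shows "lem \<alpha> \<alpha>" "lem \<alpha> \<beta> \<Longrightarrow> lem \<beta> \<alpha> \<Longrightarrow> \<alpha> = \<beta>"
    "lem \<alpha> \<beta> \<Longrightarrow> lem \<beta> \<gamma> \<Longrightarrow> lem \<alpha> \<gamma>" "lem \<alpha> \<beta> \<or> lem \<beta> \<alpha>"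
    "mdeg \<alpha> < mdeg \<beta> \<Longrightarrow> lem \<alpha> \<beta>"
proof -
  have mo: "is_monomial_order lem" and deg: "\<forall>x y. mdeg x < mdeg y \<longrightarrow> lem x y"
    using assms unfolding is_deg_monomial_order_def by auto
  note mo_conjs = mo[unfolded is_monomial_order_def]
  have refl: "\<forall>x. lem x x" using mo_conjs by (elim conjE)
  have antisym: "\<forall>x y. lem x y \<and> lem y x \<longrightarrow> x = y" using mo_conjs by (elim conjE)
  have trans: "\<forall>x y z. lem x y \<and> lem y z \<longrightarrow> lem x z" using mo_conjs by (elim conjE)
  have total: "\<forall>x y. lem x y \<or> lem y x" using mo_conjs by (elim conjE)
  show "lem \<alpha> \<alpha>" using refl by blast
  show "lem \<alpha> \<beta> \<Longrightarrow> lem \<beta> \<alpha> \<Longrightarrow> \<alpha> = \<beta>" using antisym by blast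
  show "lem \<alpha> \<beta> \<Longrightarrow> lem \<beta> \<gamma> \<Longrightarrow> lem \<alpha> \<gamma>" using trans by blast
  show "lem \<alpha> \<beta> \<or> lem \<beta> \<alpha>" using total by blast
  show "mdeg \<alpha> < mdeg \<beta> \<Longrightarrow> lem \<alpha> \<beta>" using deg by blast
qed

lemma deg_monomial_order_mdeg_mono:
  assumes "is_deg_monomial_order lem" "lem \<alpha> \<beta>"
  shows "mdeg \<alpha> \<le> mdeg \<beta>"
proof (rule ccontr)
  assume "\<not> mdeg \<alpha> \<le> mdeg \<beta>"
  then have "lem \<beta> \<alpha>" using deg_monomial_orderD(5)[OF assms(1)] by simp
  then have "\<alpha> = \<beta>" using deg_monomial_orderD(2)[OF assms] by simp
  with \<open>\<not> mdeg \<alpha> \<le> mdeg \<beta>\<close> show False by simp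
qed

lemma finite_mdeg_le: "finite {\<alpha>::('v::finite) mon. mdeg \<alpha> \<le> k}"
proof (rule finite_imageD)
  have "Poly_Mapping.lookup \<alpha> v \<le> mdeg \<alpha>" for \<alpha> :: "'v mon" and v
    unfolding mdeg_def by (rule member_le_sum) simp_all
  then have "Poly_Mapping.lookup ` {\<alpha>::'v mon. mdeg \<alpha> \<le> k} \<subseteq> Pi\<^sub>E UNIV (\<lambda>_. {..k})"
    by (auto simp: PiE_UNIV_domain Pi_def intro: le_trans)
  then show "finite (Poly_Mapping.lookup ` {\<alpha>::'v mon. mdeg \<alpha> \<le> k})"
    by (rule finite_subset) (simp add: finite_PiE)
  show "inj_on Poly_Mapping.lookup {\<alpha>::'v mon. mdeg \<alpha> \<le> k}"
    by (rule inj_onI) (simp add: poly_mapping_eqI)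
qed

lemma wf_deg_monomial_order:
  assumes "is_deg_monomial_order lem"
  shows "wf {(\<alpha>, \<beta>::('v::finite) mon). lem \<alpha> \<beta> \<and> \<alpha> \<noteq> \<beta>}"
proof (rule wf_finite_segments)
  show "irrefl {(\<alpha>, \<beta>). lem \<alpha> \<beta> \<and> \<alpha> \<noteq> \<beta>}"
    by (simp add: irrefl_def)
  show "trans {(\<alpha>, \<beta>). lem \<alpha> \<beta> \<and> \<alpha> \<noteq> \<beta>}"
    using deg_monomial_orderD(2,3)[OF assms] unfolding trans_def by blast
  show "finite {\<alpha>. (\<alpha>, \<beta>) \<in> {(\<alpha>, \<beta>). lem \<alpha> \<beta> \<and> \<alpha> \<noteq> \<beta>}}" for \<beta>
    by (rule finite_subset[OF _ finite_mdeg_le[of "mdeg \<beta>"]])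
      (use deg_monomial_order_mdeg_mono[OF assms] in blast)
qed

lemma poly_mapping_sum_single:
  assumes "finite B" "Poly_Mapping.keys p \<subseteq> B"
  shows "(\<Sum>\<beta>\<in>B. Poly_Mapping.single \<beta> (Poly_Mapping.lookup p \<beta>)) = p"
  using assms by (intro poly_mapping_eqI) (auto simp: lookup_sum lookup_single when_def in_keys_iff)

definition sig_key ::
  "('k::field \<Rightarrow> real) \<Rightarrow> ('v::finite \<Rightarrow> real) \<Rightarrow> ('v mon \<Rightarrow> 'v mon \<Rightarrow> bool)
   \<Rightarrow> ('v, 'k) mpoly list \<Rightarrow> 'v mon \<times> nat \<Rightarrow> nat \<times> nat \<times> nat" where
  "sig_key val w le1 F m = (case m of (\<alpha>, i) \<Rightarrow>
     (i, tdeg (xmon \<alpha> * F ! i), of_bool (vmon \<alpha> i \<in> LM_TSyz val w le1 F)))"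

lemma le_sign_iff_sig_key:
  "le_sign val w le1 lem F m m' \<longleftrightarrow>
     sig_key val w le1 F m < sig_key val w le1 F m' \<or>
     sig_key val w le1 F m = sig_key val w le1 F m' \<and> lem (fst m) (fst m')"
  unfolding le_sign_def sig_key_def by (cases m; cases m') (auto simp: Let_def)

lemma linorder_le_sign:
  assumes "is_deg_monomial_order lem"
  shows "class.linorder (le_sign val w le1 lem F) (lt_sign val w le1 lem F)"
proof unfold_locales
  note lem = deg_monomial_orderD[OF assms]
  let ?key = "sig_key val w le1 F"
  fix x y z :: "'a mon \<times> nat"
  show "le_sign val w le1 lem F x x"
    by (simp add: le_sign_iff_sig_key lem(1))
  show "le_sign val w le1 lem F x y \<or> le_sign val w le1 lem F y x"
    using lem(4)[of "fst x" "fst y"] less_linear[of "?key x" "?key y"]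
    by (auto simp: le_sign_iff_sig_key)
  show antisym: "x = y" if "le_sign val w le1 lem F x y" "le_sign val w le1 lem F y x"
  proof -
    have "?key x = ?key y" "lem (fst x) (fst y)" "lem (fst y) (fst x)"
      using that by (auto simp: le_sign_iff_sig_key)
    then have "snd x = snd y" "fst x = fst y"
      using lem(2) by (auto simp: sig_key_def split: prod.splits)
    then show ?thesis by (simp add: prod_eq_iff)
  qed
  show "le_sign val w le1 lem F x z" if "le_sign val w le1 lem F x y" "le_sign val w le1 lem F y z"
    using that lem(3)[of "fst x" "fst y" "fst z"] less_trans[of "?key x" "?key y" "?key z"]
    by (auto simp: le_sign_iff_sig_key)
  show "lt_sign val w le1 lem F x y \<longleftrightarrow>
      le_sign val w le1 lem F x y \<and> \<not> le_sign val w le1 lem F y x"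
    using antisym lem(1) unfolding lt_sign_def by (auto simp: le_sign_iff_sig_key)
qed

lemma wf_lt_sign:
  assumes "is_deg_monomial_order lem"
  shows "wf {(m, m'). lt_sign val w le1 lem F m m'}"
proof -
  let ?R = "{(k, k'::nat \<times> nat \<times> nat). k < k'} <*lex*> {(\<alpha>, \<beta>). lem \<alpha> \<beta> \<and> \<alpha> \<noteq> \<beta>}"
  have "{(m, m'). lt_sign val w le1 lem F m m'} \<subseteq> inv_image ?R (\<lambda>m. (sig_key val w le1 F m, fst m))"
    unfolding lt_sign_def le_sign_iff_sig_key by (auto simp: sig_key_def prod_eq_iff split: prod.splits)
  moreover have "wf (inv_image ?R (\<lambda>m. (sig_key val w le1 F m, fst m)))"
    by (intro wf_inv_image wf_lex_prod wf wf_deg_monomial_order assms)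
  ultimately show ?thesis by (rule wf_subset[rotated])
qed

text \<open>The image in I of the element \<Sum> c(\<alpha>, i) x^\<alpha> e_i of A^s.\<close>

definition term_comb :: "('v, 'k::comm_semiring_1) mpoly list \<Rightarrow> ('v mon \<times> nat \<Rightarrow> 'k) \<Rightarrow> ('v, 'k) mpoly"
  where "term_comb F c = (\<Sum>t | c t \<noteq> 0. Poly_Mapping.single (fst t) (c t) * F ! snd t)"

lemma term_comb_eq_sum:
  assumes "finite T" "{t. c t \<noteq> 0} \<subseteq> T"
  shows "term_comb F c = (\<Sum>t\<in>T. Poly_Mapping.single (fst t) (c t) * F ! snd t)"
  unfolding term_comb_def using assms by (intro sum.mono_neutral_left) auto

lemma term_comb_lincomb:
  fixes c d :: "'v mon \<times> nat \<Rightarrow> 'k::comm_semiring_1"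
  assumes "finite {t. c t \<noteq> 0}" "finite {t. d t \<noteq> 0}"
  shows "term_comb F (\<lambda>t. a * c t + b * d t)
    = Poly_Mapping.single 0 a * term_comb F c + Poly_Mapping.single 0 b * term_comb F d"
proof -
  let ?T = "{t. c t \<noteq> 0} \<union> {t. d t \<noteq> 0}"
  have "finite ?T" using assms by simp
  then show ?thesis
    by (subst (1 2 3) term_comb_eq_sum[of ?T])
      (auto simp: sum_distrib_left sum.distrib[symmetric] single_add distrib_right
        mult.assoc[symmetric] mult_single)
qed

lemma ideal_of_term_comb:
  assumes "p \<in> ideal_of F"
  obtains c where "finite {t. c t \<noteq> 0}" "\<forall>t. c t \<noteq> 0 \<longrightarrow> snd t < length F"
    "p = term_comb F c"
proof -
  obtain a where p: "p = (\<Sum>j<length F. a j * F ! j)"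
    using assms unfolding ideal_of_def by auto
  define B where "B = (\<Union>j<length F. Poly_Mapping.keys (a j))"
  define c where "c t = (if snd t < length F then Poly_Mapping.lookup (a (snd t)) (fst t) else 0)" for t
  have "finite B" unfolding B_def by simp
  have keys_B: "Poly_Mapping.keys (a j) \<subseteq> B" if "j < length F" for j
    unfolding B_def using that by auto
  have supp: "{t. c t \<noteq> 0} \<subseteq> B \<times> {..<length F}"
    unfolding B_def c_def by (auto simp: in_keys_iff split: if_splits)
  have "term_comb F c = (\<Sum>(\<beta>, j)\<in>B \<times> {..<length F}. Poly_Mapping.single \<beta> (c (\<beta>, j)) * F ! j)"
    using \<open>finite B\<close> supp by (subst term_comb_eq_sum) (auto simp: case_prod_beta)
  also have "\<dots> = (\<Sum>j<length F. (\<Sum>\<beta>\<in>B. Poly_Mapping.single \<beta> (Poly_Mapping.lookup (a j) \<beta>)) * F ! j)"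
    by (subst sum.cartesian_product[symmetric], subst sum.swap) (simp add: c_def sum_distrib_right)
  also have "\<dots> = p"
    unfolding p using \<open>finite B\<close> keys_B by (intro sum.cong refl) (simp add: poly_mapping_sum_single)
  finally have "p = term_comb F c" by simp
  moreover have "finite {t. c t \<noteq> 0}"
    using supp by (rule finite_subset) (simp add: \<open>finite B\<close>)
  moreover have "\<forall>t. c t \<noteq> 0 \<longrightarrow> snd t < length F"
    by (simp add: c_def)
  ultimately show ?thesis
    using that by blast
qed

lemma lookup_single_0_mult:
  "Poly_Mapping.lookup (Poly_Mapping.single 0 a * p) \<beta> = a * Poly_Mapping.lookup p \<beta>"
  by (simp flip: mult_map_scale_conv_mult add: map.rep_eq when_def)

text \<open>LM is a definite description; scaling leaves its defining predicate unchanged, so this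
  holds without knowing that the leading term is unique.\<close>

lemma LM_single_0_mult:
  assumes "is_valuation val" "a \<noteq> 0"
  shows "LM val w le1 (Poly_Mapping.single 0 a * p) = LM val w le1 p"
proof -
  have keys: "Poly_Mapping.keys (Poly_Mapping.single 0 a * p) = Poly_Mapping.keys p"
    using assms(2) by (auto simp: in_keys_iff lookup_single_0_mult)
  have val_mult: "val (a * x) = val a + val x" if "x \<noteq> 0" for x
    using assms that unfolding is_valuation_def by blast
  have "trop_less val w le1 (a * Poly_Mapping.lookup p \<beta>, \<beta>) (a * Poly_Mapping.lookup p \<gamma>, \<gamma>)
      \<longleftrightarrow> trop_less val w le1 (Poly_Mapping.lookup p \<beta>, \<beta>) (Poly_Mapping.lookup p \<gamma>, \<gamma>)"
    if "\<beta> \<in> Poly_Mapping.keys p" "\<gamma> \<in> Poly_Mapping.keys p" for \<beta> \<gamma>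
    using that val_mult unfolding trop_less_def by (auto simp: in_keys_iff)
  then show ?thesis
    unfolding LM_def keys lookup_single_0_mult by (metis (no_types, lifting))
qed

locale signature_order =
  fixes val :: "'k::field \<Rightarrow> real" and w :: "'v::finite \<Rightarrow> real"
    and le1 lem :: "'v mon \<Rightarrow> 'v mon \<Rightarrow> bool" and F :: "('v, 'k) mpoly list"
  assumes deg_order: "is_deg_monomial_order lem"
begin

abbreviation sig_le (infix "\<preceq>" 50) where "m \<preceq> m' \<equiv> le_sign val w le1 lem F m m'"
abbreviation sig_less (infix "\<prec>" 50) where "m \<prec> m' \<equiv> lt_sign val w le1 lem F m m'"
abbreviation signature where "signature p \<equiv> sig val w le1 lem F p"
abbreviation I_below where "I_below m \<equiv> I_le val w le1 lem F m"

sublocale sig_ord: linorder "(\<preceq>)" "(\<prec>)"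
  by (rule linorder_le_sign[OF deg_order])

lemma wf_sig_less: "wf {(m, m'). m \<prec> m'}"
  by (rule wf_lt_sign[OF deg_order])

definition supported_below :: "('v mon \<times> nat \<Rightarrow> 'k) \<Rightarrow> 'v mon \<times> nat \<Rightarrow> bool" where
  "supported_below c m \<longleftrightarrow> finite {t. c t \<noteq> 0} \<and> (\<forall>t. c t \<noteq> 0 \<longrightarrow> snd t < length F \<and> t \<preceq> m)"

lemma I_below_iff: "p \<in> I_below m \<longleftrightarrow> (\<exists>c. supported_below c m \<and> p = term_comb F c)"
  unfolding I_le_def supported_below_def term_comb_def by blast

lemma supported_below_lincomb:
  assumes "supported_below c m" "supported_below d m"
  shows "supported_below (\<lambda>t. a * c t + b * d t) m"
proof -
  have "{t. a * c t + b * d t \<noteq> 0} \<subseteq> {t. c t \<noteq> 0} \<union> {t. d t \<noteq> 0}" by auto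
  then show ?thesis
    using assms unfolding supported_below_def by (auto intro: finite_subset)
qed

lemma obtain_leading_index:
  assumes "finite {t. c t \<noteq> 0}" "\<forall>t. c t \<noteq> 0 \<longrightarrow> snd t < length F" "term_comb F c \<noteq> 0"
  obtains m where "c m \<noteq> 0" "supported_below c m"
proof -
  have "{t. c t \<noteq> 0} \<noteq> {}"
  proof
    assume "{t. c t \<noteq> 0} = {}"
    then have "term_comb F c = 0" unfolding term_comb_def by (simp only: sum.empty)
    with assms(3) show False by contradiction
  qed
  then obtain m where m: "c m \<noteq> 0" and maximal: "\<forall>t\<in>{t. c t \<noteq> 0}. m \<preceq> t \<longrightarrow> m = t"
    using sig_ord.finite_has_maximal[OF assms(1)] by blast
  have "t \<preceq> m" if "c t \<noteq> 0" for t
  proof (cases "m \<preceq> t")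
    case True
    with maximal that have "m = t" by blast
    then show ?thesis by simp
  next
    case False
    then show ?thesis using sig_ord.linear by blast
  qed
  with m assms(1,2) show ?thesis
    using that unfolding supported_below_def by blast
qed

lemma signature_least:
  assumes "snd m < length F" "p \<in> I_below m"
  shows "p \<in> I_below (signature p)" "signature p \<preceq> m"
proof -
  let ?S = "{m. snd m < length F \<and> p \<in> I_below m}"
  have "m \<in> ?S" using assms by simp
  then obtain m0 where m0: "m0 \<in> ?S" and no_smaller: "\<And>m'. (m', m0) \<in> {(m, m'). m \<prec> m'} \<Longrightarrow> m' \<notin> ?S"
    by (rule wfE_min[OF wf_sig_less]) blast
  have least: "m0 \<preceq> m'" if "m' \<in> ?S" for m'
    using no_smaller[of m'] that sig_ord.not_less[of m' m0] by blast
  have "signature p = m0"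
    unfolding sig_def
  proof (rule the_equality)
    show "snd m0 < length F \<and> p \<in> I_below m0 \<and> (\<forall>m'. snd m' < length F \<and> p \<in> I_below m' \<longrightarrow> m0 \<preceq> m')"
      using m0(1) least by simp
  next
    fix m1
    assume "snd m1 < length F \<and> p \<in> I_below m1 \<and> (\<forall>m'. snd m' < length F \<and> p \<in> I_below m' \<longrightarrow> m1 \<preceq> m')"
    then have "m1 \<preceq> m0" "m0 \<preceq> m1" using m0(1) least by blast+
    then show "m1 = m0" by (rule sig_ord.order_antisym)
  qed
  then show "p \<in> I_below (signature p)" "signature p \<preceq> m"
    using m0(1) least assms by auto
qed

lemma signature_le_leading_index:
  assumes "supported_below c m" "c m \<noteq> 0"
  shows "signature (term_comb F c) \<preceq> m"
  using assms signature_least(2)[of m] unfolding supported_below_def I_below_iff by blast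

lemma in_I_below_signature:
  assumes "p \<in> ideal_of F" "p \<noteq> 0"
  shows "p \<in> I_below (signature p)"
proof -
  obtain c where c: "finite {t. c t \<noteq> 0}" "\<forall>t. c t \<noteq> 0 \<longrightarrow> snd t < length F"
    "p = term_comb F c"
    using ideal_of_term_comb[OF assms(1)] by blast
  then obtain m where "c m \<noteq> 0" "supported_below c m"
    using obtain_leading_index assms(2) by metis
  then show ?thesis
    using signature_least(1)[of m] c(3) unfolding I_below_iff supported_below_def by blast
qed

lemma coeff_at_signature_nonzero:
  assumes "supported_below c (signature (term_comb F c))" "term_comb F c \<noteq> 0"
  shows "c (signature (term_comb F c)) \<noteq> 0"
proof -
  obtain m where m: "c m \<noteq> 0" "supported_below c m"
    using obtain_leading_index assms unfolding supported_below_def by metis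
  have "m = signature (term_comb F c)"
  proof (rule sig_ord.order_antisym)
    show "m \<preceq> signature (term_comb F c)" using assms(1) m(1) unfolding supported_below_def by blast
    show "signature (term_comb F c) \<preceq> m" using signature_le_leading_index[OF m(2,1)] .
  qed
  with m(1) show ?thesis by simp
qed

lemma signature_representation:
  assumes "p \<in> ideal_of F" "p \<noteq> 0"
  obtains c where "supported_below c (signature p)" "p = term_comb F c" "c (signature p) \<noteq> 0"
proof -
  obtain c where c: "supported_below c (signature p)" "p = term_comb F c"
    using in_I_below_signature[OF assms] unfolding I_below_iff by blast
  with assms(2) have "c (signature p) \<noteq> 0"
    using coeff_at_signature_nonzero by blast
  with c show ?thesis using that by blast
qed

lemma signature_less_if_coeff_vanishes:
  assumes "supported_below c m" "c m = 0" "term_comb F c \<noteq> 0"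
  shows "signature (term_comb F c) \<prec> m"
proof -
  obtain t where t: "c t \<noteq> 0" "supported_below c t"
    using obtain_leading_index assms(1,3) unfolding supported_below_def by metis
  have "t \<prec> m"
    using assms(1,2) t(1) unfolding supported_below_def sig_ord.less_le by metis
  with signature_le_leading_index[OF t(2,1)] show ?thesis
    by (rule sig_ord.le_less_trans)
qed

end

theorem mainTheorem3:
  fixes val :: "'k::field \<Rightarrow> real"
    and w :: "'v::finite \<Rightarrow> real"
    and le1 lem :: "'v mon \<Rightarrow> 'v mon \<Rightarrow> bool"
    and F :: "('v, 'k) mpoly list"
    and f g :: "('v, 'k) mpoly"
  assumes "is_valuation val"
    and "\<forall>v. w v \<in> val ` (UNIV - {0})"
    and "is_monomial_order le1"
    and "is_deg_monomial_order lem"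
    and "sorted (map tdeg F)"
    and "f \<in> ideal_of F" and "g \<in> ideal_of F"
    and "f \<noteq> 0" and "g \<noteq> 0"
    and "sig val w le1 lem F f = sig val w le1 lem F g"
    and "LM val w le1 f \<noteq> LM val w le1 g"
  shows "\<exists>a b :: 'k. a \<noteq> 0 \<and> b \<noteq> 0 \<and>
           Poly_Mapping.single 0 a * f + Poly_Mapping.single 0 b * g \<noteq> 0 \<and>
           lt_sign val w le1 lem F
             (sig val w le1 lem F (Poly_Mapping.single 0 a * f + Poly_Mapping.single 0 b * g))
             (sig val w le1 lem F f)"
proof -
  interpret signature_order val w le1 lem F
    by unfold_locales (rule assms(4))
  define m where "m = signature f"
  obtain c where c: "supported_below c m" "f = term_comb F c" "c m \<noteq> 0"
    using signature_representation[OF assms(6,8)] unfolding m_def by blast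
  obtain d where d: "supported_below d m" "g = term_comb F d" "d m \<noteq> 0"
    using signature_representation[OF assms(7,9)] unfolding m_def assms(10) by blast
  define e where "e t = d m * c t + (- c m) * d t" for t
  have "finite {t. c t \<noteq> 0}" "finite {t. d t \<noteq> 0}"
    using c(1) d(1) unfolding supported_below_def by blast+
  then have h: "Poly_Mapping.single 0 (d m) * f + Poly_Mapping.single 0 (- c m) * g = term_comb F e"
    unfolding e_def c(2) d(2) by (rule term_comb_lincomb[symmetric])
  have nonzero: "term_comb F e \<noteq> 0"
  proof
    assume "term_comb F e = 0"
    then have "Poly_Mapping.single 0 (d m) * f = Poly_Mapping.single 0 (c m) * g"
      unfolding h[symmetric] by (simp add: single_uminus add_eq_0_iff)
    then have "LM val w le1 f = LM val w le1 g"
      using LM_single_0_mult[OF assms(1)] c(3) d(3) by metis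
    with assms(11) show False by contradiction
  qed
  have "supported_below e m"
    unfolding e_def by (rule supported_below_lincomb[OF c(1) d(1)])
  moreover have "e m = 0"
    by (simp add: e_def mult.commute)
  ultimately have "signature (term_comb F e) \<prec> m"
    using nonzero by (rule signature_less_if_coeff_vanishes)
  moreover have "- c m \<noteq> 0"
    using c(3) by simp
  ultimately show ?thesis
    using nonzero d(3) unfolding h[symmetric] m_def by blast
qed

end
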